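(* Let $\Gamma$ be a set of clauses. If $\Gamma$ has a regWRTL refutation $R$, then $\Gamma$ has a pool resolution refutation $R'$ whose size is no greater than the size of $R$.
   Context: A literal is a propositional variable $x$ or its negation $\overline{x}$; a clause is a set of literals, interpreted as their disjunction. Three inference rules deriving a clause $C$ from clauses $A$ and $B$ with respect to a literal $x$ (the resolution variable), where $\overline{x}\notin A$ and $x\notin B$: - Resolution: requires $x\in A$, $\overline{x}\in B$, and $C=(A\setminus\{x\})\cup(B\setminus\{\overline{x}\})$. - Degenerate resolution: if $x\in A$ and $\overline x\in B$, $C$ is as in resolution; if $x\in A$ and $\overline x\notin B$, $C=B$; if $x\notin A$ and $\overline x\in B$, $C=A$; otherwise $C$ is one of $A$ or $B$. - w-resolution: $C=(A\setminus\{x\})\cup(B\setminus\{\overline{x}\})$ (no requirement that $x\in A$ or $\overline x\in B$). For a tree $T$, the postorder $<_T$ is defined by: if $v$ is in the subtree of the left child of $u$ and $w$ in the subtree of the right child of $u$, then $v<_T w<_T u$. A regRTL derivation of a clause $C$ from $\Gamma$ is a tree-like derivation $T$ such that (a) each leaf is labeled with either a clause of $\Gamma$ or a clause (a "lemma") that labels some node earlier in $T$ in the postorder $<_T$; (b) each internal node is labeled with a clause and a variable, and its clause is obtained by resolution on that variable from the clauses labeling its two children; (c) $T$ is regular: no variable is used as resolution variable more than once along any root-to-leaf path, and no variable occurring in $C$ is used as a resolution variable; (d) the root is labeled $C$. It is a refutation if $C$ is the empty clause. A regWRTL derivation is defined the same way but allowing w-resolution inferences in (b); a pool resolution derivation is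 defined the same way but allowing degenerate resolution inferences in (b). The size of a derivation is the number of clauses (nodes) in it. *)

theory Defs
  imports Main
begin

datatype 'v lit = Pos 'v | Neg 'v

fun var :: "'v lit \<Rightarrow> 'v" where
  "var (Pos v) = v"
| "var (Neg v) = v"

fun comp :: "'v lit \<Rightarrow> 'v lit" where
  "comp (Pos v) = Neg v"
| "comp (Neg v) = Pos v"

type_synonym 'v clause = "'v lit set"

definition vars :: "'v clause \<Rightarrow> 'v set" where
  "vars C = var ` C"

definition res_rule :: "'v lit \<Rightarrow> 'v clause \<Rightarrow> 'v clause \<Rightarrow> 'v clause \<Rightarrow> bool" where
  "res_rule x A B C \<longleftrightarrow> comp x \<notin> A \<and> x \<notin> B \<and> x \<in> A \<and> comp x \<in> B \<and>
     C = (A - {x}) \<union> (B - {comp x})"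

definition dres_rule :: "'v lit \<Rightarrow> 'v clause \<Rightarrow> 'v clause \<Rightarrow> 'v clause \<Rightarrow> bool" where
  "dres_rule x A B C \<longleftrightarrow> comp x \<notin> A \<and> x \<notin> B \<and>
     (if x \<in> A \<and> comp x \<in> B then C = (A - {x}) \<union> (B - {comp x})
      else if x \<in> A \<and> comp x \<notin> B then C = B
      else if x \<notin> A \<and> comp x \<in> B then C = A
      else (C = A \<or> C = B))"

definition wres_rule :: "'v lit \<Rightarrow> 'v clause \<Rightarrow> 'v clause \<Rightarrow> 'v clause \<Rightarrow> bool" where
  "wres_rule x A B C \<longleftrightarrow> comp x \<notin> A \<and> x \<notin> B \<and> C = (A - {x}) \<union> (B - {comp x})"

text \<open>A leaf carries a clause; an internal node carries its clause, the resolution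
  literal x (whose variable is the resolution variable), and its left child (the
  premise A) and right child (the premise B).\<close>

datatype 'v dtree = Leaf "'v clause" | Node "'v clause" "'v lit" "'v dtree" "'v dtree"

fun label :: "'v dtree \<Rightarrow> 'v clause" where
  "label (Leaf C) = C"
| "label (Node C x l r) = C"

text \<open>Positions of nodes: paths from the root, False = left child, True = right child.\<close>

fun positions :: "'v dtree \<Rightarrow> bool list set" where
  "positions (Leaf C) = {[]}"
| "positions (Node C x l r) =
     insert [] (Cons False ` positions l \<union> Cons True ` positions r)"

fun sub :: "'v dtree \<Rightarrow> bool list \<Rightarrow> 'v dtree" where
  "sub t [] = t"
| "sub (Node C x l r) (False # p) = sub l p"
| "sub (Node C x l r) (True # p) = sub r p"
| "sub (Leaf C) (b # p) = Leaf C"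

definition post_less :: "bool list \<Rightarrow> bool list \<Rightarrow> bool" where
  "post_less p q \<longleftrightarrow> (\<exists>d. d \<noteq> [] \<and> p = q @ d) \<or>
     (\<exists>c p' q'. p = c @ False # p' \<and> q = c @ True # q')"

fun is_leaf :: "'v dtree \<Rightarrow> bool" where
  "is_leaf (Leaf C) = True"
| "is_leaf (Node C x l r) = False"

fun resvar :: "'v dtree \<Rightarrow> 'v option" where
  "resvar (Leaf C) = None"
| "resvar (Node C x l r) = Some (var x)"

definition size_d :: "'v dtree \<Rightarrow> nat" where
  "size_d T = card (positions T)"

definition rtl_deriv ::
  "('v lit \<Rightarrow> 'v clause \<Rightarrow> 'v clause \<Rightarrow> 'v clause \<Rightarrow> bool) \<Rightarrow>
   'v clause set \<Rightarrow> 'v dtree \<Rightarrow> 'v clause \<Rightarrow> bool" where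
  "rtl_deriv rule \<Gamma> T C \<longleftrightarrow>
     \<comment> \<open>(a) leaves: clauses of \<Gamma> or lemmas from earlier nodes in postorder\<close>
     (\<forall>p\<in>positions T. is_leaf (sub T p) \<longrightarrow>
        label (sub T p) \<in> \<Gamma> \<or>
        (\<exists>q\<in>positions T. post_less q p \<and> label (sub T q) = label (sub T p))) \<and>
     \<comment> \<open>(b) internal nodes are inferences by the rule\<close>
     (\<forall>p\<in>positions T. \<forall>D x l r. sub T p = Node D x l r \<longrightarrow> rule x (label l) (label r) D) \<and>
     \<comment> \<open>(c) regularity\<close>
     (\<forall>p\<in>positions T. \<forall>d. d \<noteq> [] \<longrightarrow> p @ d \<in> positions T \<longrightarrow>
        resvar (sub T p) = None \<or> resvar (sub T p) \<noteq> resvar (sub T (p @ d))) \<and>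
     (\<forall>p\<in>positions T. \<forall>v. resvar (sub T p) = Some v \<longrightarrow> v \<notin> vars C) \<and>
     \<comment> \<open>(d) root\<close>
     label T = C"

definition regRTL_deriv where "regRTL_deriv = rtl_deriv res_rule"
definition regWRTL_deriv where "regWRTL_deriv = rtl_deriv wres_rule"
definition pool_deriv where "pool_deriv = rtl_deriv dres_rule"

end

theory Submission
  imports Defs
begin

text \<open>
  Walk through the regWRTL refutation R in postorder and
  replace every clause by a subclause of it.  At an internal node with
  resolution literal x, whose new premises are A' \<subseteq> A and B' \<subseteq> B, the new
  clause is the degenerate resolvent of A' and B' on x; it is contained in the
  w-resolvent of A and B, so labels only shrink.  A leaf with clause C is
  replaced by some clause D \<subseteq> C that is already available, i.e. lies in \<Gamma> or
  labels a new node earlier in postorder; such a D exists because C itself is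
  in \<Gamma> or labels an earlier node of R, whose new label is a subclause of C.
  The transformation keeps the tree shape and the resolution variables, so
  regularity and size are preserved, and the root becomes a subclause of the
  empty clause.
\<close>

lemma post_less_Nil_left [simp]: "\<not> post_less [] p"
  unfolding post_less_def by auto

lemma post_less_Cons:
  "post_less (a # p) (b # q) \<longleftrightarrow> (a = b \<and> post_less p q) \<or> (\<not> a \<and> b)"
proof
  assume "post_less (a # p) (b # q)"
  then consider (below) d where "d \<noteq> []" "a # p = (b # q) @ d"
    | (left_right) c p' q' where "a # p = c @ False # p'" "b # q = c @ True # q'"
    unfolding post_less_def by blast
  then show "(a = b \<and> post_less p q) \<or> (\<not> a \<and> b)"
  proof cases
    case below
    then show ?thesis unfolding post_less_def by auto
  next
    case left_right
    then show ?thesis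
      by (cases c) (auto simp: post_less_def)
  qed
next
  assume "(a = b \<and> post_less p q) \<or> (\<not> a \<and> b)"
  then consider "a = b" "post_less p q" | "\<not> a" "b" by blast
  then show "post_less (a # p) (b # q)"
  proof cases
    case 1
    from \<open>post_less p q\<close> consider (below) d where "d \<noteq> []" "p = q @ d"
      | (left_right) c p' q' where "p = c @ False # p'" "q = c @ True # q'"
      unfolding post_less_def by blast
    then show ?thesis
    proof cases
      case below
      then show ?thesis using \<open>a = b\<close> unfolding post_less_def by auto
    next
      case left_right
      then have "a # p = (a # c) @ False # p' \<and> b # q = (a # c) @ True # q'"
        using \<open>a = b\<close> by simp
      then show ?thesis unfolding post_less_def by blast
    qed
  next
    case 2
    then have "a # p = [] @ False # p \<and> b # q = [] @ True # q" by simp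
    then show ?thesis unfolding post_less_def by blast
  qed
qed

lemma Nil_in_positions [simp]: "[] \<in> positions T"
  by (cases T) auto

lemma sub_Leaf [simp]: "sub (Leaf C) p = Leaf C"
  by (cases p) auto

definition labs :: "'v dtree \<Rightarrow> 'v clause set" where
  "labs T = (\<lambda>p. label (sub T p)) ` positions T"

definition leaves_ok :: "('v clause \<Rightarrow> bool) \<Rightarrow> 'v dtree \<Rightarrow> bool" where
  "leaves_ok P T \<longleftrightarrow> (\<forall>p\<in>positions T. is_leaf (sub T p) \<longrightarrow>
     P (label (sub T p)) \<or>
     (\<exists>q\<in>positions T. post_less q p \<and> label (sub T q) = label (sub T p)))"

lemma leaves_ok_Leaf [simp]: "leaves_ok P (Leaf C) \<longleftrightarrow> P C"
  unfolding leaves_ok_def by simp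

lemma ball_positions_Node:
  "(\<forall>p\<in>positions (Node C x l r). Q p) \<longleftrightarrow>
     Q [] \<and> (\<forall>p\<in>positions l. Q (False # p)) \<and> (\<forall>p\<in>positions r. Q (True # p))"
  by auto

lemma bex_positions_Node:
  "(\<exists>p\<in>positions (Node C x l r). Q p) \<longleftrightarrow>
     Q [] \<or> (\<exists>p\<in>positions l. Q (False # p)) \<or> (\<exists>p\<in>positions r. Q (True # p))"
  by auto

text \<open>In the right subtree every clause of the left subtree counts as an axiom,
  since the whole left subtree precedes it in postorder.\<close>

lemma leaves_ok_Node:
  "leaves_ok P (Node C x l r) \<longleftrightarrow>
     leaves_ok P l \<and> leaves_ok (\<lambda>D. P D \<or> D \<in> labs l) r"
  unfolding leaves_ok_def labs_def ball_positions_Node bex_positions_Node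
  by (simp add: post_less_Cons image_iff Bex_def conj_disj_distribL ex_disj_distrib eq_commute)

lemma leaves_ok_mono:
  assumes "leaves_ok P T" and "\<And>C. P C \<Longrightarrow> Q C"
  shows "leaves_ok Q T"
  using assms unfolding leaves_ok_def by blast

definition inferences ::
  "('v lit \<Rightarrow> 'v clause \<Rightarrow> 'v clause \<Rightarrow> 'v clause \<Rightarrow> bool) \<Rightarrow> 'v dtree \<Rightarrow> bool" where
  "inferences rule T \<longleftrightarrow>
     (\<forall>p\<in>positions T. \<forall>D x l r. sub T p = Node D x l r \<longrightarrow> rule x (label l) (label r) D)"

lemma inferences_Leaf [simp]: "inferences rule (Leaf C)"
  unfolding inferences_def by simp

lemma inferences_Node [simp]:
  "inferences rule (Node C x l r) \<longleftrightarrow>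
     rule x (label l) (label r) C \<and> inferences rule l \<and> inferences rule r"
  unfolding inferences_def ball_positions_Node by simp

definition regular :: "'v dtree \<Rightarrow> 'v clause \<Rightarrow> bool" where
  "regular T C \<longleftrightarrow>
     (\<forall>p\<in>positions T. \<forall>d. d \<noteq> [] \<longrightarrow> p @ d \<in> positions T \<longrightarrow>
        resvar (sub T p) = None \<or> resvar (sub T p) \<noteq> resvar (sub T (p @ d))) \<and>
     (\<forall>p\<in>positions T. \<forall>v. resvar (sub T p) = Some v \<longrightarrow> v \<notin> vars C)"

lemma rtl_deriv_iff:
  "rtl_deriv rule \<Gamma> T C \<longleftrightarrow>
     leaves_ok (\<lambda>D. D \<in> \<Gamma>) T \<and> inferences rule T \<and> regular T C \<and> label T = C"
  unfolding rtl_deriv_def leaves_ok_def inferences_def regular_def by blast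

lemma regular_cong:
  assumes "positions T' = positions T" and "\<And>p. resvar (sub T' p) = resvar (sub T p)"
  shows "regular T' C = regular T C"
  using assms unfolding regular_def by simp

definition dres :: "'v lit \<Rightarrow> 'v clause \<Rightarrow> 'v clause \<Rightarrow> 'v clause" where
  "dres x A B = (if x \<in> A \<and> comp x \<in> B then (A - {x}) \<union> (B - {comp x})
                 else if x \<in> A then B else A)"

lemma dres_of_subclauses:
  assumes "wres_rule x A B C" and "A' \<subseteq> A" and "B' \<subseteq> B"
  shows "dres_rule x A' B' (dres x A' B')" and "dres x A' B' \<subseteq> C"
  using assms unfolding wres_rule_def dres_rule_def dres_def by auto

text \<open>tr S T rebuilds T in postorder; S holds the clauses available so far.\<close>

fun tr :: "'v clause set \<Rightarrow> 'v dtree \<Rightarrow> 'v dtree" where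
  "tr S (Leaf C) = Leaf (SOME D. D \<in> S \<and> D \<subseteq> C)"
| "tr S (Node C x l r) =
     (let l' = tr S l; r' = tr (S \<union> labs l') r
      in Node (dres x (label l') (label r')) x l' r')"

lemma tr_positions: "positions (tr S T) = positions T"
  by (induction T arbitrary: S) (auto simp: Let_def)

lemma tr_resvar: "resvar (sub (tr S T) p) = resvar (sub T p)"
proof (induction T arbitrary: S p)
  case (Node C x l r)
  show ?case
  proof (cases p)
    case (Cons b q)
    then show ?thesis using Node.IH by (cases b) (simp_all add: Let_def)
  qed (simp add: Let_def)
qed simp

lemma labs_subclause:
  assumes "positions T' = positions T"
    and "\<forall>p\<in>positions T. label (sub T' p) \<subseteq> label (sub T p)"
    and "C \<in> labs T"
  shows "\<exists>D\<in>labs T'. D \<subseteq> C"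
  using assms unfolding labs_def by auto

lemma leaves_ok_right_subtree:
  assumes "leaves_ok (\<lambda>C. \<exists>D\<in>S. D \<subseteq> C) (Node C x l r)"
    and "positions l' = positions l"
    and "\<forall>p\<in>positions l. label (sub l' p) \<subseteq> label (sub l p)"
  shows "leaves_ok (\<lambda>C. \<exists>D\<in>S \<union> labs l'. D \<subseteq> C) r"
proof -
  have "leaves_ok (\<lambda>C. (\<exists>D\<in>S. D \<subseteq> C) \<or> C \<in> labs l) r"
    using assms(1) by (simp add: leaves_ok_Node)
  then show ?thesis
    by (rule leaves_ok_mono) (use labs_subclause[OF assms(2,3)] in blast)
qed

lemma leaf_choice:
  assumes "\<exists>D\<in>S. D \<subseteq> C"
  shows "(SOME D. D \<in> S \<and> D \<subseteq> C) \<in> S" and "(SOME D. D \<in> S \<and> D \<subseteq> C) \<subseteq> C"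
  using someI_ex[of "\<lambda>D. D \<in> S \<and> D \<subseteq> C"] assms by auto

lemma tr_Node:
  "tr S (Node C x l r) =
     Node (dres x (label (tr S l)) (label (tr (S \<union> labs (tr S l)) r))) x
       (tr S l) (tr (S \<union> labs (tr S l)) r)"
  by (simp add: Let_def)

lemma tr_shrinks:
  assumes "inferences wres_rule T" and "leaves_ok (\<lambda>C. \<exists>D\<in>S. D \<subseteq> C) T"
  shows "\<forall>p\<in>positions T. label (sub (tr S T) p) \<subseteq> label (sub T p)"
  using assms
proof (induction T arbitrary: S)
  case (Leaf C)
  then show ?case using leaf_choice(2) by simp
next
  case (Node C x l r)
  define l' where "l' = tr S l"
  define r' where "r' = tr (S \<union> labs l') r"
  have shrink_l: "\<forall>p\<in>positions l. label (sub l' p) \<subseteq> label (sub l p)"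
    using Node.IH(1) Node.prems by (simp add: l'_def leaves_ok_Node)
  have "leaves_ok (\<lambda>C. \<exists>D\<in>S \<union> labs l'. D \<subseteq> C) r"
    using leaves_ok_right_subtree[OF Node.prems(2) _ shrink_l] by (simp add: l'_def tr_positions)
  then have shrink_r: "\<forall>p\<in>positions r. label (sub r' p) \<subseteq> label (sub r p)"
    using Node.IH(2) Node.prems(1) by (simp add: r'_def)
  have step: "wres_rule x (label l) (label r) C"
    using Node.prems(1) by simp
  have "label l' \<subseteq> label l" "label r' \<subseteq> label r"
    using shrink_l shrink_r by (metis Nil_in_positions sub.simps(1))+
  then have "dres x (label l') (label r') \<subseteq> C"
    by (rule dres_of_subclauses(2)[OF step])
  then show ?case
    using shrink_l shrink_r
    unfolding tr_Node ball_positions_Node l'_def[symmetric] r'_def[symmetric] by simp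
qed

corollary tr_label_subset:
  assumes "inferences wres_rule T" and "leaves_ok (\<lambda>C. \<exists>D\<in>S. D \<subseteq> C) T"
  shows "label (tr S T) \<subseteq> label T"
  using tr_shrinks[OF assms] by (metis Nil_in_positions sub.simps(1))

lemma tr_sound:
  assumes "inferences wres_rule T" and "leaves_ok (\<lambda>C. \<exists>D\<in>S. D \<subseteq> C) T"
  shows "inferences dres_rule (tr S T) \<and> leaves_ok (\<lambda>D. D \<in> S) (tr S T)"
  using assms
proof (induction T arbitrary: S)
  case (Leaf C)
  then show ?case using leaf_choice(1) by simp
next
  case (Node C x l r)
  define l' where "l' = tr S l"
  define r' where "r' = tr (S \<union> labs l') r"
  have shrink_l: "\<forall>p\<in>positions l. label (sub l' p) \<subseteq> label (sub l p)"
    using tr_shrinks[of l S] Node.prems by (simp add: l'_def leaves_ok_Node)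
  have r_ok: "leaves_ok (\<lambda>C. \<exists>D\<in>S \<union> labs l'. D \<subseteq> C) r"
    using leaves_ok_right_subtree[OF Node.prems(2) _ shrink_l] by (simp add: l'_def tr_positions)
  then have shrink_r: "\<forall>p\<in>positions r. label (sub r' p) \<subseteq> label (sub r p)"
    using tr_shrinks[of r "S \<union> labs l'"] Node.prems(1) by (simp add: r'_def)
  have step: "wres_rule x (label l) (label r) C"
    using Node.prems(1) by simp
  have "label l' \<subseteq> label l" "label r' \<subseteq> label r"
    using shrink_l shrink_r by (metis Nil_in_positions sub.simps(1))+
  then have "dres_rule x (label l') (label r') (dres x (label l') (label r'))"
    by (rule dres_of_subclauses(1)[OF step])
  moreover have "inferences dres_rule l' \<and> leaves_ok (\<lambda>D. D \<in> S) l'"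
    using Node.IH(1) Node.prems by (simp add: l'_def leaves_ok_Node)
  moreover have "inferences dres_rule r' \<and> leaves_ok (\<lambda>D. D \<in> S \<union> labs l') r'"
    using Node.IH(2)[OF _ r_ok] Node.prems(1) by (simp add: r'_def)
  ultimately show ?case
    unfolding tr_Node l'_def[symmetric] r'_def[symmetric] by (simp add: leaves_ok_Node)
qed

theorem proposition1p9:
  fixes \<Gamma> :: "'v clause set" and R :: "'v dtree"
  assumes "regWRTL_deriv \<Gamma> R {}"
  shows "\<exists>R'. pool_deriv \<Gamma> R' {} \<and> size_d R' \<le> size_d R"
proof -
  define R' where "R' = tr \<Gamma> R"
  have R: "leaves_ok (\<lambda>C. C \<in> \<Gamma>) R" "inferences wres_rule R" "regular R {}" "label R = {}"
    using assms by (simp_all add: regWRTL_deriv_def rtl_deriv_iff)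
  have leaves: "leaves_ok (\<lambda>C. \<exists>D\<in>\<Gamma>. D \<subseteq> C) R"
    using R(1) by (rule leaves_ok_mono) blast
  have "label R' = {}"
    using tr_label_subset[OF R(2) leaves] R(4) by (simp add: R'_def)
  moreover have "regular R' {}"
    using R(3) regular_cong tr_positions tr_resvar by (metis R'_def)
  ultimately have "pool_deriv \<Gamma> R' {}"
    using tr_sound[OF R(2) leaves] by (simp add: pool_deriv_def rtl_deriv_iff R'_def)
  moreover have "size_d R' = size_d R"
    by (simp add: size_d_def R'_def tr_positions)
  ultimately show ?thesis by auto
qed

end
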